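(* Let $K$ be a finite extension of $\mathbb Q_p$ with ring of integers $\mathcal O_K$ and residue field $\tilde K$, and let $f\in\mathcal O_K(x)$ be a rational map with good reduction. If $f$ has height zero, then every critical point of its reduction $\tilde f$ is the reduction of a critical point of $f$.
   Context: The height of $f$ is the largest integer $h\ge 0$ such that the reduction can be written $\tilde f(x)=\tilde Q(x^{p^h})$ for some rational function $\tilde Q$ over the residue field; $f$ has positive height if and only if the derivative of $\tilde f$ is identically zero. *)

theory Defs
  imports Complex_Main "HOL-Computational_Algebra.Polynomial" "HOL-Computational_Algebra.Primes"
begin

definition nonarch_abs :: "('a::field \<Rightarrow> real) \<Rightarrow> bool" where
  "nonarch_abs v \<longleftrightarrow>
     (\<forall>x. v x \<ge> 0) \<and> (\<forall>x. v x = 0 \<longleftrightarrow> x = 0) \<and>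
     (\<forall>x y. v (x * y) = v x * v y) \<and> (\<forall>x y. v (x + y) \<le> max (v x) (v y))"

definition subfield :: "'a::field set \<Rightarrow> bool" where
  "subfield K \<longleftrightarrow> 0 \<in> K \<and> 1 \<in> K \<and>
     (\<forall>x\<in>K. \<forall>y\<in>K. x + y \<in> K \<and> x - y \<in> K \<and> x * y \<in> K) \<and>
     (\<forall>x\<in>K. inverse x \<in> K)"

definition v_cauchy :: "('a \<Rightarrow> real) \<Rightarrow> (nat \<Rightarrow> 'a::field) \<Rightarrow> bool" where
  "v_cauchy v X \<longleftrightarrow> (\<forall>e>0. \<exists>N. \<forall>m\<ge>N. \<forall>n\<ge>N. v (X m - X n) < e)"

definition v_tendsto :: "('a \<Rightarrow> real) \<Rightarrow> (nat \<Rightarrow> 'a::field) \<Rightarrow> 'a \<Rightarrow> bool" where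
  "v_tendsto v X l \<longleftrightarrow> (\<forall>e>0. \<exists>N. \<forall>n\<ge>N. v (X n - l) < e)"

definition v_complete :: "('a \<Rightarrow> real) \<Rightarrow> 'a::field set \<Rightarrow> bool" where
  "v_complete v K \<longleftrightarrow> (\<forall>X. (\<forall>n. X n \<in> K) \<and> v_cauchy v X \<longrightarrow> (\<exists>l\<in>K. v_tendsto v X l))"

text \<open>The closure of the prime field \<open>\<rat>\<close> inside \<open>K\<close>; when \<open>K\<close> is complete and the
  absolute value is nonarchimedean with \<open>|p| < 1\<close>, this is (a copy of) \<open>\<rat>\<^sub>p\<close>.\<close>
definition Qp_in :: "('a \<Rightarrow> real) \<Rightarrow> 'a::field_char_0 set \<Rightarrow> 'a set" where
  "Qp_in v K = {x \<in> K. \<exists>X. (\<forall>n. X n \<in> \<rat>) \<and> v_tendsto v X x}"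

definition finite_dim_over :: "'a::field set \<Rightarrow> 'a set \<Rightarrow> bool" where
  "finite_dim_over F K \<longleftrightarrow> (\<exists>B. finite B \<and> B \<subseteq> K \<and>
      (\<forall>x\<in>K. \<exists>c. (\<forall>b\<in>B. c b \<in> F) \<and> x = (\<Sum>b\<in>B. c b * b)))"

definition finite_ext_Qp :: "('a \<Rightarrow> real) \<Rightarrow> nat \<Rightarrow> 'a::field_char_0 set \<Rightarrow> bool" where
  "finite_ext_Qp v p K \<longleftrightarrow> prime p \<and> nonarch_abs v \<and> subfield K \<and>
     v (of_nat p) < 1 \<and> v_complete v K \<and> finite_dim_over (Qp_in v K) K"

text \<open>The ambient field (UNIV) is an algebraic closure of \<open>K\<close>.\<close>
definition alg_closure_of :: "'a::field set \<Rightarrow> bool" where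
  "alg_closure_of K \<longleftrightarrow>
     (\<forall>P::'a poly. degree P \<ge> 1 \<longrightarrow> (\<exists>x. poly P x = 0)) \<and>
     (\<forall>x. \<exists>P. P \<noteq> 0 \<and> (\<forall>i. coeff P i \<in> K) \<and> poly P x = 0)"

definition int_ring :: "('a \<Rightarrow> real) \<Rightarrow> 'a set \<Rightarrow> 'a set" where
  "int_ring v K = {x \<in> K. v x \<le> 1}"

text \<open>\<open>red\<close> is the reduction map from the valuation ring of the ambient field onto its
  residue field (the type \<open>'k\<close>), i.e. a surjective ring homomorphism with kernel the
  maximal ideal.\<close>
definition residue_map :: "('a::field \<Rightarrow> real) \<Rightarrow> ('a \<Rightarrow> 'k::field) \<Rightarrow> bool" where
  "residue_map v red \<longleftrightarrow>
     (\<forall>x y. v x \<le> 1 \<longrightarrow> v y \<le> 1 \<longrightarrow> red (x + y) = red x + red y \<and> red (x * y) = red x * red y) \<and>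
     red 1 = 1 \<and> (\<forall>x. v x \<le> 1 \<longrightarrow> (red x = 0 \<longleftrightarrow> v x < 1)) \<and>
     (\<forall>z. \<exists>x. v x \<le> 1 \<and> red x = z)"

text \<open>Reduction of points of \<open>\<P>\<^sup>1\<close> (\<open>None\<close> is the point at infinity).\<close>
definition red_pt :: "('a \<Rightarrow> real) \<Rightarrow> ('a \<Rightarrow> 'k) \<Rightarrow> 'a option \<Rightarrow> 'k option" where
  "red_pt v red z = (case z of None \<Rightarrow> None
      | Some a \<Rightarrow> (if v a \<le> 1 then Some (red a) else None))"

definition rdeg :: "'f::field poly \<Rightarrow> 'f poly \<Rightarrow> nat" where
  "rdeg P Q = max (degree P) (degree Q)"

text \<open>\<open>x^d P(1/x)\<close>\<close>
definition rev_at :: "nat \<Rightarrow> 'f::field poly \<Rightarrow> 'f poly" where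
  "rev_at d P = (\<Sum>i\<le>d. monom (coeff P (d - i)) i)"

definition fin_local_deg :: "'f::field poly \<Rightarrow> 'f poly \<Rightarrow> 'f \<Rightarrow> nat" where
  "fin_local_deg P Q a =
     (if poly Q a \<noteq> 0 then order a (P - smult (poly P a / poly Q a) Q) else order a Q)"

definition local_deg :: "'f::field poly \<Rightarrow> 'f poly \<Rightarrow> 'f option \<Rightarrow> nat" where
  "local_deg P Q z = (case z of Some a \<Rightarrow> fin_local_deg P Q a
      | None \<Rightarrow> fin_local_deg (rev_at (rdeg P Q) P) (rev_at (rdeg P Q) Q) 0)"

definition critical_point :: "'f::field poly \<Rightarrow> 'f poly \<Rightarrow> 'f option \<Rightarrow> bool" where
  "critical_point P Q z \<longleftrightarrow> local_deg P Q z \<ge> 2"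

definition good_reduction :: "('a::field \<Rightarrow> 'k::field) \<Rightarrow> 'a poly \<Rightarrow> 'a poly \<Rightarrow> bool" where
  "good_reduction red P Q \<longleftrightarrow>
     coprime (map_poly red P) (map_poly red Q) \<and>
     rdeg (map_poly red P) (map_poly red Q) = rdeg P Q"

text \<open>The reduction \<open>P/Q\<close> (over a field of characteristic \<open>p\<close>) can be written as
  \<open>A(x^{p^h}) / B(x^{p^h})\<close>.\<close>
definition admits_height :: "nat \<Rightarrow> 'k::field poly \<Rightarrow> 'k poly \<Rightarrow> nat \<Rightarrow> bool" where
  "admits_height p P Q h \<longleftrightarrow> (\<exists>A B. B \<noteq> 0 \<and>
     P * pcompose B (monom 1 (p ^ h)) = Q * pcompose A (monom 1 (p ^ h)))"

definition height_is :: "nat \<Rightarrow> 'k::field poly \<Rightarrow> 'k poly \<Rightarrow> nat \<Rightarrow> bool" where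
  "height_is p P Q h \<longleftrightarrow> admits_height p P Q h \<and> (\<forall>h'. admits_height p P Q h' \<longrightarrow> h' \<le> h)"

end

theory Submission
  imports Defs
begin

text \<open>
  Away from infinity, the critical points of \<open>P/Q\<close> are the zeros of the Wronskian
  \<open>W = P' Q - P Q'\<close> that are not common zeros of \<open>P\<close> and \<open>Q\<close>, and good reduction rules out
  common zeros. Reduction commutes with forming the Wronskian. If the reduced Wronskian vanished,
  coprimality of the reduced numerator and denominator would force both derivatives to vanish,
  i.e. the reduced map would be a function of \<open>x\<^sup>p\<close>, contradicting height zero. A Gauss-norm
  argument over the algebraically closed field then lifts every zero of the nonzero reduced
  Wronskian to a zero of \<open>W\<close> in the closed unit disc. At infinity the relevant quantity is the
  coefficient of \<open>x\<^bsup>2d-2\<^esup>\<close> in \<open>W\<close>, \<open>d\<close> the degree of the map: if it reduces to zero, then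
  either it vanishes, so that \<open>\<infinity>\<close> is critical for \<open>P/Q\<close>, or the degree of \<open>W\<close> drops under
  reduction and \<open>W\<close> has a zero outside the unit disc, which reduces to \<open>\<infinity>\<close>.
\<close>

section \<open>Wronskians and finite critical points\<close>

definition wronskian :: "'a::idom poly \<Rightarrow> 'a poly \<Rightarrow> 'a poly" where
  "wronskian P Q = pderiv P * Q - P * pderiv Q"

lemma order_ge_2_imp_poly_pderiv_eq_0:
  fixes R :: "'a::idom poly"
  assumes "2 \<le> order a R"
  shows "poly R a = 0" and "poly (pderiv R) a = 0"
proof -
  have "poly R a = 0 \<and> poly (pderiv R) a = 0"
  proof (cases "R = 0")
    case False
    with assms obtain S where "R = [:-a, 1:]^2 * S"
      using order_divides by (metis dvdE)
    then show ?thesis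
      by (simp add: pderiv_mult pderiv_power_Suc pderiv_pCons numeral_2_eq_2 del: power_Suc)
  qed simp
  then show "poly R a = 0" and "poly (pderiv R) a = 0" by simp_all
qed

lemma order_ge_2_if_poly_pderiv_eq_0:
  fixes R :: "'a::{idom,semiring_char_0} poly"
  assumes "R \<noteq> 0" "poly R a = 0" "poly (pderiv R) a = 0"
  shows "2 \<le> order a R"
proof -
  have "pderiv R \<noteq> 0"
  proof
    assume "pderiv R = 0"
    then obtain c where "R = [:c:]"
      using pderiv_eq_0_iff degree_eq_zeroE by blast
    with assms show False by simp
  qed
  then have "order a (pderiv R) \<noteq> 0"
    using assms(3) order_root by blast
  then show ?thesis
    using order_pderiv[OF assms(1,2)] by simp
qed

lemma wronskian_root_if_fin_local_deg_ge_2: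
  fixes A B :: "'a::field poly"
  assumes "2 \<le> fin_local_deg A B b"
  shows "poly (wronskian A B) b = 0"
proof (cases "poly B b = 0")
  case True
  then have "poly (pderiv B) b = 0"
    using assms order_ge_2_imp_poly_pderiv_eq_0 unfolding fin_local_deg_def by auto
  then show ?thesis
    using True by (simp add: wronskian_def)
next
  case False
  define c where "c = poly A b / poly B b"
  have "2 \<le> order b (A - smult c B)"
    using assms False unfolding fin_local_deg_def c_def by simp
  then have "poly (A - smult c B) b = 0" "poly (pderiv (A - smult c B)) b = 0"
    by (rule order_ge_2_imp_poly_pderiv_eq_0)+
  then show ?thesis
    by (simp add: wronskian_def pderiv_diff pderiv_smult)
qed

lemma fin_local_deg_ge_2_if_wronskian_root:
  fixes P Q :: "'a::field_char_0 poly"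
  assumes "Q \<noteq> 0" and "\<forall>c. P \<noteq> smult c Q"
    and W: "poly (wronskian P Q) a = 0" and "poly P a \<noteq> 0 \<or> poly Q a \<noteq> 0"
  shows "2 \<le> fin_local_deg P Q a"
proof (cases "poly Q a = 0")
  case True
  with assms have "poly (pderiv Q) a = 0"
    by (simp add: wronskian_def)
  with True show ?thesis
    using order_ge_2_if_poly_pderiv_eq_0 assms(1) unfolding fin_local_deg_def by simp
next
  case False
  define c where "c = poly P a / poly Q a"
  have "poly (pderiv P) a = c * poly (pderiv Q) a"
    using W False by (simp add: wronskian_def c_def field_simps)
  then have "2 \<le> order a (P - smult c Q)"
    using assms(2) False
    by (intro order_ge_2_if_poly_pderiv_eq_0) (simp_all add: c_def pderiv_diff pderiv_smult)
  then show ?thesis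
    using False unfolding fin_local_deg_def c_def by simp
qed

section \<open>The critical point at infinity\<close>

lemma coeff_mult_at_degree_bounds:
  fixes A B :: "'a::comm_semiring_0 poly"
  assumes "degree A \<le> m" "degree B \<le> k"
  shows "coeff (A * B) (m + k) = coeff A m * coeff B k"
proof -
  have "coeff (A * B) (m + k) = (\<Sum>i\<in>{m}. coeff A i * coeff B (m + k - i))"
    unfolding coeff_mult
  proof (rule sum.mono_neutral_right)
    show "\<forall>i\<in>{..m + k} - {m}. coeff A i * coeff B (m + k - i) = 0"
    proof
      fix i
      assume "i \<in> {..m + k} - {m}"
      then have "m < i \<or> k < m + k - i"
        by auto
      then show "coeff A i * coeff B (m + k - i) = 0"
        using assms by (auto simp: coeff_eq_0)
    qed
  qed auto
  then show ?thesis by simp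
qed

lemma coeff_mult_below_degree_bounds:
  fixes A B :: "'a::comm_semiring_0 poly"
  assumes "degree A \<le> Suc m" "degree B \<le> Suc k"
  shows "coeff (A * B) (Suc (m + k)) = coeff A (Suc m) * coeff B k + coeff A m * coeff B (Suc k)"
proof -
  have "coeff (A * B) (Suc (m + k)) = (\<Sum>i\<in>{m, Suc m}. coeff A i * coeff B (Suc (m + k) - i))"
    unfolding coeff_mult
  proof (rule sum.mono_neutral_right)
    show "\<forall>i\<in>{..Suc (m + k)} - {m, Suc m}. coeff A i * coeff B (Suc (m + k) - i) = 0"
    proof
      fix i
      assume "i \<in> {..Suc (m + k)} - {m, Suc m}"
      then have "Suc m < i \<or> Suc k < Suc (m + k) - i"
        by auto
      then show "coeff A i * coeff B (Suc (m + k) - i) = 0"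
        using assms by (auto simp: coeff_eq_0)
    qed
  qed auto
  then show ?thesis by (simp add: add.commute)
qed

definition wronskian_top_coeff :: "nat \<Rightarrow> 'a::idom poly \<Rightarrow> 'a poly \<Rightarrow> 'a" where
  "wronskian_top_coeff d P Q = coeff P d * coeff Q (d - 1) - coeff P (d - 1) * coeff Q d"

lemma degree_wronskian_le:
  fixes P Q :: "'a::idom poly"
  assumes "degree P \<le> d" "degree Q \<le> d"
  shows "degree (wronskian P Q) \<le> 2 * d - 2"
proof (cases d)
  case 0
  then show ?thesis
    using assms by (auto elim!: degree_eq_zeroE simp: wronskian_def pderiv_pCons)
next
  case (Suc e)
  have dP: "degree (pderiv P) \<le> e" and dQ: "degree (pderiv Q) \<le> e"
    using assms Suc by (auto intro!: degree_le simp: coeff_pderiv coeff_eq_0)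
  have "degree (wronskian P Q) \<le> Suc (e + e)"
    unfolding wronskian_def using assms dP dQ Suc degree_mult_le[of "pderiv P" Q] degree_mult_le[of P "pderiv Q"]
    by (intro degree_diff_le) auto
  moreover have "coeff (wronskian P Q) (Suc (e + e)) = 0"
    using coeff_mult_at_degree_bounds[OF dP, of Q "Suc e"] coeff_mult_at_degree_bounds[OF _ dQ, of P "Suc e"]
      assms Suc by (simp add: wronskian_def coeff_pderiv algebra_simps)
  ultimately have "degree (wronskian P Q) \<le> e + e"
    by (metis degree_0 le_SucE leading_coeff_0_iff zero_le)
  then show ?thesis
    using Suc by simp
qed

lemma coeff_wronskian_top:
  fixes P Q :: "'a::idom poly"
  assumes "degree P \<le> d" "degree Q \<le> d"
  shows "coeff (wronskian P Q) (2 * d - 2) = wronskian_top_coeff d P Q"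
proof (cases d)
  case 0
  then show ?thesis
    using assms by (auto elim!: degree_eq_zeroE simp: wronskian_def wronskian_top_coeff_def pderiv_pCons)
next
  case (Suc e)
  show ?thesis
  proof (cases e)
    case 0
    then show ?thesis
      using Suc by (simp add: wronskian_def wronskian_top_coeff_def coeff_mult_0 coeff_pderiv)
  next
    case (Suc f)
    have dP: "degree P \<le> Suc (Suc f)" "degree (pderiv P) \<le> Suc f"
      and dQ: "degree Q \<le> Suc (Suc f)" "degree (pderiv Q) \<le> Suc f"
      using assms \<open>d = Suc e\<close> Suc by (auto intro!: degree_le simp: coeff_pderiv coeff_eq_0)
    have idx: "2 * d - 2 = Suc (f + Suc f)"
      using \<open>d = Suc e\<close> Suc by simp
    have left: "coeff (pderiv P * Q) (Suc (f + Suc f)) =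
        coeff (pderiv P) (Suc f) * coeff Q (Suc f) + coeff (pderiv P) f * coeff Q (Suc (Suc f))"
      using coeff_mult_below_degree_bounds[OF dP(2) dQ(1)] by simp
    have right: "coeff (P * pderiv Q) (Suc (f + Suc f)) =
        coeff P (Suc (Suc f)) * coeff (pderiv Q) f + coeff P (Suc f) * coeff (pderiv Q) (Suc f)"
      using coeff_mult_below_degree_bounds[OF dP(1) dQ(2)] by (simp add: add.commute)
    show ?thesis
      unfolding idx wronskian_def coeff_diff left right
      using \<open>d = Suc e\<close> Suc by (simp add: wronskian_top_coeff_def coeff_pderiv algebra_simps)
  qed
qed

lemma coeff_rev_at: "coeff (rev_at d P) i = (if i \<le> d then coeff P (d - i) else 0)"
  unfolding rev_at_def coeff_sum by (simp add: coeff_monom)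

lemma rev_at_smult: "rev_at d (smult c P) = smult c (rev_at d P)"
  by (rule poly_eqI) (simp add: coeff_rev_at)

lemma rev_at_inj:
  assumes "degree P \<le> d" "degree Q \<le> d" "rev_at d P = rev_at d Q"
  shows "P = Q"
proof (rule poly_eqI)
  fix j
  show "coeff P j = coeff Q j"
  proof (cases "j \<le> d")
    case True
    then show ?thesis
      using arg_cong[OF assms(3), of "\<lambda>R. coeff R (d - j)"] by (simp add: coeff_rev_at)
  qed (use assms in \<open>simp add: coeff_eq_0\<close>)
qed

lemma poly_wronskian_rev_at_0:
  "poly (wronskian (rev_at d A) (rev_at d B)) 0 = - wronskian_top_coeff d A B"
  by (cases d) (simp_all add: wronskian_def wronskian_top_coeff_def poly_0_coeff_0 coeff_mult_0
      coeff_pderiv coeff_rev_at)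

lemma coeff_rdeg_neq_0:
  assumes "P \<noteq> 0 \<or> Q \<noteq> 0"
  shows "coeff P (rdeg P Q) \<noteq> 0 \<or> coeff Q (rdeg P Q) \<noteq> 0"
proof (cases "degree Q \<le> degree P")
  case True
  show ?thesis
  proof (cases "P = 0")
    case True
    with assms \<open>degree Q \<le> degree P\<close> have "degree Q = 0" "Q \<noteq> 0"
      by auto
    with True show ?thesis
      using leading_coeff_neq_0[of Q] by (simp add: rdeg_def)
  qed (use True in \<open>simp add: rdeg_def max_def\<close>)
next
  case False
  then show ?thesis
    by (auto simp: rdeg_def max_def)
qed

lemma wronskian_top_coeff_eq_0_if_critical_point_infinity:
  fixes A B :: "'a::field poly"
  assumes "critical_point A B None"
  shows "wronskian_top_coeff (rdeg A B) A B = 0"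
  using wronskian_root_if_fin_local_deg_ge_2[of "rev_at (rdeg A B) A" "rev_at (rdeg A B) B" 0]
    poly_wronskian_rev_at_0[of "rdeg A B" A B] assms
  by (simp add: critical_point_def local_deg_def)

lemma critical_point_infinity_if_wronskian_top_coeff_eq_0:
  fixes P Q :: "'a::field_char_0 poly"
  assumes "Q \<noteq> 0" "\<forall>c. P \<noteq> smult c Q" "wronskian_top_coeff (rdeg P Q) P Q = 0"
  shows "critical_point P Q None"
proof -
  define d where "d = rdeg P Q"
  have deg: "degree P \<le> d" "degree Q \<le> d"
    unfolding d_def rdeg_def by simp_all
  have "rev_at d Q \<noteq> rev_at d 0"
    using rev_at_inj[OF deg(2)] assms(1) by auto
  then have "rev_at d Q \<noteq> 0"
    by (simp add: rev_at_def)
  moreover have "\<forall>c. rev_at d P \<noteq> smult c (rev_at d Q)"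
    using assms(2) rev_at_inj[OF deg(1) order.trans[OF degree_smult_le deg(2)]]
    by (metis rev_at_smult)
  moreover have "poly (wronskian (rev_at d P) (rev_at d Q)) 0 = 0"
    using assms(3) poly_wronskian_rev_at_0[of d P Q] by (simp add: d_def)
  moreover have "poly (rev_at d P) 0 \<noteq> 0 \<or> poly (rev_at d Q) 0 \<noteq> 0"
    using coeff_rdeg_neq_0[of P Q] assms(1) by (simp add: poly_0_coeff_0 coeff_rev_at d_def)
  ultimately have "2 \<le> fin_local_deg (rev_at d P) (rev_at d Q) 0"
    by (rule fin_local_deg_ge_2_if_wronskian_root)
  then show ?thesis
    by (simp add: critical_point_def local_deg_def d_def)
qed

section \<open>Height zero forces a nonzero Wronskian\<close>

text \<open>Polynomials over an arbitrary field are not an instance of the library's gcd classes, so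
  Bezout's identity is derived directly: a nonzero combination of least degree divides every
  combination.\<close>

lemma coprime_poly_bezout:
  fixes A B :: "'a::field poly"
  assumes "coprime A B"
  obtains U V where "A * U + B * V = 1"
proof -
  define S where "S = {G. G \<noteq> 0 \<and> (\<exists>U V. G = A * U + B * V)}"
  have "A \<noteq> 0 \<or> B \<noteq> 0"
    using assms by auto
  moreover have "A = A * 1 + B * 0" "B = A * 0 + B * 1"
    by simp_all
  ultimately have "A \<in> S \<or> B \<in> S"
    unfolding S_def by blast
  then obtain G where "G \<in> S" and G_min: "\<And>H. H \<in> S \<Longrightarrow> degree G \<le> degree H"
    using ex_has_least_nat[of "\<lambda>G. G \<in> S" _ degree] by blast
  then obtain U V where "G \<noteq> 0" and G: "G = A * U + B * V"
    unfolding S_def by blast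
  have G_dvd: "G dvd A * X + B * Y" for X Y
  proof -
    define R where "R = (A * X + B * Y) mod G"
    define D where "D = (A * X + B * Y) div G"
    have "R = A * X + B * Y - D * G"
      by (simp add: R_def D_def minus_div_mult_eq_mod)
    also have "\<dots> = A * (X - D * U) + B * (Y - D * V)"
      by (simp add: G algebra_simps)
    finally have "R = A * (X - D * U) + B * (Y - D * V)" .
    then have "R \<noteq> 0 \<Longrightarrow> R \<in> S"
      unfolding S_def by blast
    moreover have "R \<noteq> 0 \<Longrightarrow> degree R < degree G"
      unfolding R_def using \<open>G \<noteq> 0\<close> by (rule degree_mod_less')
    ultimately have "R = 0"
      using G_min leD by blast
    then show ?thesis
      by (simp add: R_def dvd_eq_mod_eq_0)
  qed
  have "is_unit G"
    using G_dvd[of 1 0] G_dvd[of 0 1] by (intro coprime_common_divisor[OF assms]) simp_all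
  then obtain H where "G * H = 1"
    by (metis dvdE)
  then have "A * (U * H) + B * (V * H) = 1"
    using G by (simp add: algebra_simps)
  then show thesis
    by (rule that)
qed

lemma coprime_poly_dvd_mult_imp_dvd:
  fixes A B C :: "'a::field poly"
  assumes "coprime A B" "B dvd A * C"
  shows "B dvd C"
proof -
  obtain U V where UV: "A * U + B * V = 1"
    using assms(1) by (rule coprime_poly_bezout)
  have "C = C * (A * U + B * V)"
    by (simp add: UV)
  also have "\<dots> = (A * C) * U + B * (V * C)"
    by (simp add: algebra_simps)
  finally have "C = (A * C) * U + B * (V * C)" .
  moreover have "B dvd (A * C) * U + B * (V * C)"
    using assms(2) by simp
  ultimately show ?thesis
    by simp
qed

lemma pderiv_eq_0_if_dvd_pderiv:
  fixes B :: "'a::field poly"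
  assumes "B dvd pderiv B"
  shows "pderiv B = 0"
proof (rule ccontr)
  assume nz: "pderiv B \<noteq> 0"
  have "degree B \<noteq> 0"
  proof
    assume "degree B = 0"
    then obtain c where "B = [:c:]"
      by (rule degree_eq_zeroE)
    with nz show False
      by (simp add: pderiv_pCons)
  qed
  moreover have "degree (pderiv B) \<le> degree B - 1"
    by (intro degree_le) (simp add: coeff_pderiv coeff_eq_0)
  ultimately show False
    using dvd_imp_degree_le[OF assms nz] by linarith
qed

lemma pderiv_eq_0_if_coprime_wronskian_eq_0:
  fixes A B :: "'a::field poly"
  assumes "coprime A B" "wronskian A B = 0"
  shows "pderiv A = 0" and "pderiv B = 0"
proof -
  have W: "pderiv A * B = A * pderiv B"
    using assms(2) by (simp add: wronskian_def)
  have "B dvd A * pderiv B"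
    unfolding W[symmetric] by simp
  then show "pderiv B = 0"
    by (rule pderiv_eq_0_if_dvd_pderiv[OF coprime_poly_dvd_mult_imp_dvd[OF assms(1)]])
  have "A dvd B * pderiv A"
    unfolding mult.commute[of B] W by simp
  moreover have "coprime B A"
    using assms(1) by (rule coprime_imp_coprime) simp_all
  ultimately show "pderiv A = 0"
    by (metis pderiv_eq_0_if_dvd_pderiv coprime_poly_dvd_mult_imp_dvd)
qed

lemma pcompose_monom_monom:
  fixes c :: "'a::comm_semiring_1"
  shows "pcompose (monom c n) (monom 1 p) = monom c (p * n)"
  by (induction n) (simp_all add: monom_0 monom_Suc pcompose_pCons mult_monom)

lemma coeff_pcompose_monom:
  fixes F :: "'a::comm_semiring_1 poly"
  assumes "0 < p"
  shows "coeff (pcompose F (monom 1 p)) m = (if p dvd m then coeff F (m div p) else 0)"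
proof -
  have "pcompose F (monom 1 p) = (\<Sum>i\<le>degree F. monom (coeff F i) (p * i))"
    by (subst (1) poly_as_sum_of_monoms[symmetric]) (simp add: pcompose_sum pcompose_monom_monom)
  then have "coeff (pcompose F (monom 1 p)) m =
      (\<Sum>i\<le>degree F. if i = m div p \<and> p dvd m then coeff F i else 0)"
    using assms by (auto simp: coeff_sum coeff_monom intro!: sum.cong)
  then show ?thesis
    by (auto simp: coeff_eq_0 not_le)
qed

lemma CHAR_dvd_if_pderiv_eq_0:
  fixes A :: "'a::idom poly"
  assumes "pderiv A = 0" "coeff A m \<noteq> 0"
  shows "CHAR('a) dvd m"
proof (cases m)
  case (Suc n)
  then have "of_nat m * coeff A m = 0"
    using assms(1) coeff_pderiv[of A n] by simp
  then show ?thesis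
    using assms(2) by (simp add: of_nat_eq_0_iff_char_dvd)
qed simp

lemma pcompose_monom_CHAR_if_pderiv_eq_0:
  fixes A :: "'a::idom poly"
  assumes "0 < CHAR('a)" "pderiv A = 0"
  obtains B where "A = pcompose B (monom 1 CHAR('a))"
proof
  let ?p = "CHAR('a)"
  show "A = pcompose (\<Sum>n\<le>degree A. monom (coeff A (?p * n)) n) (monom 1 ?p)"
  proof (rule poly_eqI)
    fix m
    show "coeff A m = coeff (pcompose (\<Sum>n\<le>degree A. monom (coeff A (?p * n)) n) (monom 1 ?p)) m"
    proof (cases "?p dvd m")
      case True
      have "coeff A m = 0" if "degree A < m div ?p"
        using that div_le_dividend[of m ?p] by (intro coeff_eq_0) linarith
      with True show ?thesis
        using assms(1) by (auto simp: coeff_pcompose_monom coeff_sum coeff_monom)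
    next
      case False
      then show ?thesis
        using assms CHAR_dvd_if_pderiv_eq_0 by (auto simp: coeff_pcompose_monom)
    qed
  qed
qed

lemma admits_height_1_if_wronskian_eq_0:
  fixes A B :: "'k::field poly"
  assumes "CHAR('k) = p" "0 < p" "coprime A B" "B \<noteq> 0" "wronskian A B = 0"
  shows "admits_height p A B 1"
proof -
  obtain A' B' where "A = pcompose A' (monom 1 p)" "B = pcompose B' (monom 1 p)"
    using pcompose_monom_CHAR_if_pderiv_eq_0 pderiv_eq_0_if_coprime_wronskian_eq_0[OF assms(3,5)]
      assms(1,2) by metis
  with assms(4) show ?thesis
    unfolding admits_height_def by (intro exI[of _ A'] exI[of _ B']) (auto simp: mult.commute)
qed

lemma wronskian_neq_0_if_height_0:
  fixes A B :: "'k::field poly"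
  assumes "CHAR('k) = p" "0 < p" "coprime A B" "height_is p A B 0"
  shows "wronskian A B \<noteq> 0"
proof
  assume W: "wronskian A B = 0"
  have "monom 1 (p ^ 0) = [:0, 1 :: 'k:]"
    by (simp add: monom_Suc monom_0)
  then obtain A' B' where "B' \<noteq> 0" "A * B' = B * A'"
    using assms(4) by (auto simp: height_is_def admits_height_def)
  then have "B \<noteq> 0"
    using assms(3) by auto
  then have "admits_height p A B 1"
    using admits_height_1_if_wronskian_eq_0[OF assms(1-3) _ W] by blast
  then show False
    using assms(4) by (auto simp: height_is_def)
qed

section \<open>Reduction of integral polynomials\<close>

locale nonarch_residue =
  fixes v :: "'a::field \<Rightarrow> real" and red :: "'a \<Rightarrow> 'k::field"
  assumes nonarch: "nonarch_abs v" and residue: "residue_map v red"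
begin

lemma v_nonneg: "0 \<le> v x"
  using nonarch unfolding nonarch_abs_def by blast

lemma v_eq_0_iff: "v x = 0 \<longleftrightarrow> x = 0"
  using nonarch unfolding nonarch_abs_def by blast

lemma v_mult: "v (x * y) = v x * v y"
  using nonarch unfolding nonarch_abs_def by blast

lemma v_add_le_max: "v (x + y) \<le> max (v x) (v y)"
  using nonarch unfolding nonarch_abs_def by blast

lemma v_0 [simp]: "v 0 = 0"
  by (simp add: v_eq_0_iff)

lemma v_1 [simp]: "v 1 = 1"
  using v_mult[of 1 1] v_eq_0_iff[of 1] by simp

lemma v_minus [simp]: "v (- x) = v x"
proof -
  have "v (-1) * v (-1) = 1"
    using v_mult[of "-1" "-1"] by simp
  then have "v (-1) = 1"
    using v_nonneg[of "-1"] by (metis abs_of_nonneg abs_square_eq_1 power2_eq_square)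
  then show ?thesis
    using v_mult[of "-1" x] by simp
qed

lemma v_diff_le_max: "v (x - y) \<le> max (v x) (v y)"
  using v_add_le_max[of x "- y"] by simp

lemma v_add_eq_if_less: "v y < v x \<Longrightarrow> v (x + y) = v x"
  using v_add_le_max[of x y] v_diff_le_max[of "x + y" y] by auto

lemma v_inverse: "v (inverse x) = inverse (v x)"
proof (cases "x = 0")
  case False
  then have "v x * v (inverse x) = 1"
    by (simp flip: v_mult)
  then show ?thesis
    by (simp add: inverse_unique)
qed simp

lemma v_add_le_1: "v x \<le> 1 \<Longrightarrow> v y \<le> 1 \<Longrightarrow> v (x + y) \<le> 1"
  using v_add_le_max[of x y] by simp

lemma v_diff_le_1: "v x \<le> 1 \<Longrightarrow> v y \<le> 1 \<Longrightarrow> v (x - y) \<le> 1"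
  using v_diff_le_max[of x y] by simp

lemma v_mult_le_1: "v x \<le> 1 \<Longrightarrow> v y \<le> 1 \<Longrightarrow> v (x * y) \<le> 1"
  by (simp add: v_mult mult_le_one v_nonneg)

lemma v_of_nat_le_1: "v (of_nat n) \<le> 1"
  by (induction n) (simp_all add: v_add_le_1)

lemma red_add: "v x \<le> 1 \<Longrightarrow> v y \<le> 1 \<Longrightarrow> red (x + y) = red x + red y"
  using residue unfolding residue_map_def by blast

lemma red_mult: "v x \<le> 1 \<Longrightarrow> v y \<le> 1 \<Longrightarrow> red (x * y) = red x * red y"
  using residue unfolding residue_map_def by blast

lemma red_1 [simp]: "red 1 = 1"
  using residue unfolding residue_map_def by blast

lemma red_eq_0_iff: "v x \<le> 1 \<Longrightarrow> red x = 0 \<longleftrightarrow> v x < 1"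
  using residue unfolding residue_map_def by blast

lemma red_surj: "\<exists>x. v x \<le> 1 \<and> red x = z"
  using residue unfolding residue_map_def by blast

lemma red_0 [simp]: "red 0 = 0"
  using red_eq_0_iff[of 0] by simp

lemma red_diff: "v x \<le> 1 \<Longrightarrow> v y \<le> 1 \<Longrightarrow> red (x - y) = red x - red y"
  using red_add[of "x - y" y] by (simp add: v_diff_le_1 eq_diff_eq)

lemma red_of_nat: "red (of_nat n) = of_nat n"
  by (induction n) (simp_all add: red_add v_of_nat_le_1)

lemma red_sum:
  assumes "\<And>x. x \<in> A \<Longrightarrow> v (f x) \<le> 1"
  shows "red (\<Sum>x\<in>A. f x) = (\<Sum>x\<in>A. red (f x))" and "v (\<Sum>x\<in>A. f x) \<le> 1"
proof -
  have "red (\<Sum>x\<in>A. f x) = (\<Sum>x\<in>A. red (f x)) \<and> v (\<Sum>x\<in>A. f x) \<le> 1"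
    using assms by (induction A rule: infinite_finite_induct) (simp_all add: red_add v_add_le_1)
  then show "red (\<Sum>x\<in>A. f x) = (\<Sum>x\<in>A. red (f x))" and "v (\<Sum>x\<in>A. f x) \<le> 1"
    by simp_all
qed

lemma v_eq_1_if_red_neq_0: "v x \<le> 1 \<Longrightarrow> red x \<noteq> 0 \<Longrightarrow> v x = 1"
  using red_eq_0_iff by force

lemma CHAR_residue_field:
  assumes "prime p" "v (of_nat p) < 1"
  shows "CHAR('k) = p"
proof -
  have "of_nat p = (0::'k)"
    using red_eq_0_iff[OF v_of_nat_le_1] assms(2) by (simp add: red_of_nat)
  then have "CHAR('k) dvd p"
    by (simp add: of_nat_eq_0_iff_char_dvd)
  then show ?thesis
    using assms(1) CHAR_not_1 unfolding prime_nat_iff by (metis One_nat_def)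
qed

abbreviation integral_poly :: "'a poly \<Rightarrow> bool" where
  "integral_poly F \<equiv> \<forall>i. v (coeff F i) \<le> 1"

abbreviation red_poly :: "'a poly \<Rightarrow> 'k poly" where
  "red_poly F \<equiv> map_poly red F"

lemma coeff_red_poly [simp]: "coeff (red_poly F) i = red (coeff F i)"
  by (simp add: coeff_map_poly)

lemma integral_poly_mult:
  assumes "integral_poly A" "integral_poly B"
  shows "integral_poly (A * B)" and "red_poly (A * B) = red_poly A * red_poly B"
proof -
  have "v (coeff A j * coeff B (i - j)) \<le> 1" for i j
    using assms by (simp add: v_mult_le_1)
  then show "integral_poly (A * B)" and "red_poly (A * B) = red_poly A * red_poly B"
    using assms by (auto intro!: poly_eqI simp: coeff_mult red_sum red_mult)
qed

lemma integral_poly_diff: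
  assumes "integral_poly A" "integral_poly B"
  shows "integral_poly (A - B)" and "red_poly (A - B) = red_poly A - red_poly B"
  using assms by (auto intro!: poly_eqI simp: v_diff_le_1 red_diff)

lemma integral_poly_pderiv:
  assumes "integral_poly A"
  shows "integral_poly (pderiv A)" and "red_poly (pderiv A) = pderiv (red_poly A)"
proof -
  have "v (of_nat (Suc i) * coeff A (Suc i)) \<le> 1" for i
    using assms by (intro v_mult_le_1 v_of_nat_le_1) simp
  then show "integral_poly (pderiv A)"
    by (simp only: coeff_pderiv) blast
  show "red_poly (pderiv A) = pderiv (red_poly A)"
    using assms v_of_nat_le_1 by (intro poly_eqI) (simp only: coeff_pderiv coeff_red_poly red_mult red_of_nat)
qed

lemma integral_poly_wronskian:
  assumes "integral_poly P" "integral_poly Q"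
  shows "integral_poly (wronskian P Q)"
    and "red_poly (wronskian P Q) = wronskian (red_poly P) (red_poly Q)"
proof -
  note P' = integral_poly_pderiv[OF assms(1)] and Q' = integral_poly_pderiv[OF assms(2)]
  note left = integral_poly_mult[OF P'(1) assms(2)] and right = integral_poly_mult[OF assms(1) Q'(1)]
  show "integral_poly (wronskian P Q)"
    unfolding wronskian_def by (rule integral_poly_diff(1)[OF left(1) right(1)])
  show "red_poly (wronskian P Q) = wronskian (red_poly P) (red_poly Q)"
    unfolding wronskian_def integral_poly_diff(2)[OF left(1) right(1)] left(2) right(2) P'(2) Q'(2) ..
qed

lemma red_wronskian_top_coeff:
  assumes "integral_poly P" "integral_poly Q"
  shows "red (wronskian_top_coeff d P Q) = wronskian_top_coeff d (red_poly P) (red_poly Q)"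
  using assms by (simp add: wronskian_top_coeff_def red_diff red_mult v_mult_le_1)

lemma integral_poly_poly:
  assumes "integral_poly F" "v a \<le> 1"
  shows "v (poly F a) \<le> 1" and "red (poly F a) = poly (red_poly F) (red a)"
proof -
  have "v (poly F a) \<le> 1 \<and> red (poly F a) = poly (red_poly F) (red a)"
    using assms(1)
  proof (induction F)
    case (pCons c F)
    then have "v c \<le> 1" "integral_poly F"
      by (metis coeff_pCons_0, metis coeff_pCons_Suc)
    with pCons.IH assms(2) show ?case
      by (simp add: map_poly_pCons v_add_le_1 v_mult_le_1 red_add red_mult)
  qed simp
  then show "v (poly F a) \<le> 1" and "red (poly F a) = poly (red_poly F) (red a)"
    by simp_all
qed

lemma v_coeff_eq_1_if_red_poly_neq_0:
  assumes "integral_poly F" "red_poly F \<noteq> 0"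
  obtains k where "v (coeff F k) = 1"
proof -
  obtain k where "red (coeff F k) \<noteq> 0"
    using assms(2) by (metis coeff_red_poly leading_coeff_0_iff)
  then show thesis
    using that assms(1) v_eq_1_if_red_neq_0 by blast
qed

lemma v_lead_coeff_less_1_if_root_outside_disc:
  assumes "integral_poly F" "poly F a = 0" "1 < v a"
  shows "v (lead_coeff F) < 1"
proof -
  obtain H where H: "F = [:-a, 1:] * H"
    using assms(2) by (metis dvdE poly_eq_0_iff_dvd)
  have inverse_bound: "x \<le> inverse (v a)" if "v a * x \<le> 1" for x
  proof -
    have "0 < v a"
      using assms(3) by linarith
    with that show ?thesis
      by (simp add: field_simps)
  qed
  have inverse_less_1: "inverse (v a) < 1"
    using assms(3) by (simp add: inverse_less_1_iff)
  have small: "v (coeff H k) \<le> inverse (v a)" for k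
  proof (induction k)
    case 0
    have "coeff F 0 = - (a * coeff H 0)"
      by (simp add: H)
    then have "v (a * coeff H 0) \<le> 1"
      using assms(1) v_minus by metis
    then show ?case
      by (intro inverse_bound) (simp only: v_mult)
  next
    case (Suc k)
    have "a * coeff H (Suc k) = coeff H k - coeff F (Suc k)"
      by (simp add: H)
    moreover have "v (coeff H k) \<le> 1"
      using Suc.IH inverse_less_1 by linarith
    ultimately have "v (a * coeff H (Suc k)) \<le> 1"
      using assms(1) by (simp add: v_diff_le_1)
    then show ?case
      by (intro inverse_bound) (simp only: v_mult)
  qed
  have "lead_coeff F = lead_coeff H"
    unfolding H lead_coeff_mult by simp
  then show ?thesis
    using small[of "degree H"] inverse_less_1 by simp
qed

lemma no_common_root_if_good_reduction:
  assumes "integral_poly P" "integral_poly Q" "good_reduction red P Q"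
  shows "poly P \<alpha> \<noteq> 0 \<or> poly Q \<alpha> \<noteq> 0"
proof (rule ccontr)
  assume "\<not> ?thesis"
  then have roots: "poly P \<alpha> = 0" "poly Q \<alpha> = 0"
    by simp_all
  have cop: "coprime (red_poly P) (red_poly Q)" and deg: "rdeg (red_poly P) (red_poly Q) = rdeg P Q"
    using assms(3) unfolding good_reduction_def by simp_all
  show False
  proof (cases "v \<alpha> \<le> 1")
    case True
    then show False
      using coprime_poly_0[OF cop, of "red \<alpha>"] roots
        integral_poly_poly(2)[OF assms(1) True] integral_poly_poly(2)[OF assms(2) True]
      by simp
  next
    case False
    have "red (coeff F (rdeg P Q)) = 0" if "integral_poly F" "poly F \<alpha> = 0" "degree F \<le> rdeg P Q" for F
    proof (cases "degree F = rdeg P Q")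
      case True
      then show ?thesis
        using v_lead_coeff_less_1_if_root_outside_disc[OF that(1,2)] False red_eq_0_iff that(1) by simp
    qed (use that in \<open>simp add: coeff_eq_0\<close>)
    then have "coeff (red_poly P) (rdeg P Q) = 0" "coeff (red_poly Q) (rdeg P Q) = 0"
      using assms(1,2) roots by (simp_all add: rdeg_def)
    moreover have "red_poly P \<noteq> 0 \<or> red_poly Q \<noteq> 0"
      using cop by auto
    ultimately show False
      using coeff_rdeg_neq_0 deg by metis
  qed
qed

lemma not_proportional_if_red_wronskian_neq_0:
  assumes P: "integral_poly P" and Q: "integral_poly Q"
    and W: "wronskian (red_poly P) (red_poly Q) \<noteq> 0"
  shows "Q \<noteq> 0" and "\<forall>c. P \<noteq> smult c Q"
proof -
  have smult_red: "red_poly (smult c F) = smult (red c) (red_poly F)"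
    if "integral_poly F" "v c \<le> 1" for c F
    using that by (intro poly_eqI) (simp add: red_mult)
  have W_smult: "wronskian (smult c F) F = 0" "wronskian F (smult c F) = 0" for c and F :: "'k poly"
    by (simp_all add: wronskian_def pderiv_smult mult.commute)
  show "Q \<noteq> 0"
    using W by (auto simp: wronskian_def)
  show "\<forall>c. P \<noteq> smult c Q"
  proof (intro allI notI)
    fix c
    assume P_eq: "P = smult c Q"
    show False
    proof (cases "v c \<le> 1")
      case True
      then show False
        using W W_smult(1) smult_red[OF Q True] P_eq by simp
    next
      case False
      then have "c \<noteq> 0" and v_inv: "v (inverse c) < 1"
        using v_inverse[of c] by (auto simp: inverse_less_1_iff)
      then have "Q = smult (inverse c) P"
        using P_eq by simp
      then have "red_poly Q = 0"
        using smult_red[OF P less_imp_le[OF v_inv]] red_eq_0_iff[of "inverse c"] v_inv by simp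
      then show False
        using W by (simp add: wronskian_def)
    qed
  qed
qed

end

section \<open>Lifting roots over an algebraically closed field\<close>

locale alg_closed_nonarch_residue = nonarch_residue +
  assumes alg_closed: "\<And>F :: 'a poly. 1 \<le> degree F \<Longrightarrow> \<exists>x. poly F x = 0"
begin

lemma v_coeff_linear_mult_le:
  assumes "\<And>j. v (coeff H j) \<le> M"
  shows "v (coeff ([:g, -1:] * H) k) \<le> max 1 (v g) * M"
proof -
  define c where "c = (case k of 0 \<Rightarrow> 0 | Suc j \<Rightarrow> coeff H j)"
  have "0 \<le> M"
    using assms[of 0] v_nonneg order.trans by blast
  have "v c \<le> M"
    using assms \<open>0 \<le> M\<close> by (cases k) (simp_all add: c_def)
  have "coeff ([:g, -1:] * H) k = g * coeff H k - c"
    by (cases k) (simp_all add: c_def)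
  then have "v (coeff ([:g, -1:] * H) k) \<le> max (v g * v (coeff H k)) (v c)"
    using v_diff_le_max[of "g * coeff H k" c] by (simp only: v_mult)
  also have "\<dots> \<le> max (v g * M) M"
    using assms[of k] \<open>v c \<le> M\<close> v_nonneg[of g] by (intro max.mono mult_left_mono)
  also have "\<dots> = max 1 (v g) * M"
    using \<open>0 \<le> M\<close> by (simp add: max_mult_distrib_right max.commute)
  finally show ?thesis .
qed

lemma root_free_imp_constant:
  fixes F :: "'a poly"
  assumes "\<And>x. poly F x \<noteq> 0"
  obtains c where "F = [:c:]"
proof -
  have "degree F = 0"
    using alg_closed[of F] assms by fastforce
  then show thesis
    using that degree_eq_zeroE by blast
qed

text \<open>The Gauss norm of \<open>F\<close> is \<open>|lc F| \<Prod> max 1 |g|\<close> over the roots \<open>g\<close>, and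
  \<open>|F a| = |lc F| \<Prod> |a - g|\<close>.\<close>

lemma v_coeff_le_v_poly_if_roots_far:
  assumes "F \<noteq> 0" "\<And>g. poly F g = 0 \<Longrightarrow> max 1 (v g) \<le> v (a - g)"
  shows "v (coeff F k) \<le> v (poly F a)"
  using assms
proof (induction F arbitrary: k rule: poly_root_induct[where P = "\<lambda>_. True"])
  case (no_roots F)
  then obtain c where "F = [:c:]"
    using root_free_imp_constant by blast
  then show ?case
    by (cases k) (simp_all add: v_nonneg)
next
  case (root g H)
  have "H \<noteq> 0" "\<And>g'. poly H g' = 0 \<Longrightarrow> max 1 (v g') \<le> v (a - g')"
    using root.prems by auto
  then have "\<And>j. v (coeff H j) \<le> v (poly H a)"
    using root.IH by blast
  then have "v (coeff ([:g, -1:] * H) k) \<le> max 1 (v g) * v (poly H a)"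
    by (rule v_coeff_linear_mult_le)
  also have "\<dots> \<le> v (a - g) * v (poly H a)"
    using root.prems(2)[of g] by (simp add: mult_right_mono v_nonneg)
  also have "\<dots> = v (poly ([:g, -1:] * H) a)"
  proof -
    have "poly ([:g, -1:] * H) a = - ((a - g) * poly H a)"
      by (simp add: algebra_simps)
    then show ?thesis
      by (simp only: v_minus v_mult)
  qed
  finally show ?case .
qed simp

lemma v_coeff_le_v_lead_coeff_if_roots_in_disc:
  assumes "\<And>g. poly F g = 0 \<Longrightarrow> v g \<le> 1"
  shows "v (coeff F k) \<le> v (lead_coeff F)"
  using assms
proof (induction F arbitrary: k rule: poly_root_induct[where P = "\<lambda>_. True"])
  case (no_roots F)
  then obtain c where "F = [:c:]"
    using root_free_imp_constant by blast
  then show ?case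
    by (cases k) (simp_all add: v_nonneg)
next
  case (root g H)
  have "\<And>j. v (coeff H j) \<le> v (lead_coeff H)"
    using root by auto
  then have "v (coeff ([:g, -1:] * H) k) \<le> max 1 (v g) * v (lead_coeff H)"
    by (rule v_coeff_linear_mult_le)
  moreover have "max 1 (v g) = 1"
    using root.prems by simp
  moreover have "v (lead_coeff ([:g, -1:] * H)) = v (lead_coeff H)"
    unfolding lead_coeff_mult by simp
  ultimately show ?case
    by simp
qed simp

lemma root_of_red_poly_lifts:
  assumes F: "integral_poly F" and nz: "red_poly F \<noteq> 0" and root: "poly (red_poly F) b = 0"
  obtains \<alpha> where "v \<alpha> \<le> 1" "red \<alpha> = b" "poly F \<alpha> = 0"
proof -
  have "\<exists>\<alpha>. v \<alpha> \<le> 1 \<and> red \<alpha> = b \<and> poly F \<alpha> = 0"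
  proof (rule ccontr)
    assume no_lift: "\<nexists>\<alpha>. v \<alpha> \<le> 1 \<and> red \<alpha> = b \<and> poly F \<alpha> = 0"
    obtain a where a: "v a \<le> 1" "red a = b"
      using red_surj by blast
    have far: "max 1 (v g) \<le> v (a - g)" if "poly F g = 0" for g
    proof (cases "v g \<le> 1")
      case True
      then have "red (a - g) \<noteq> 0"
        using no_lift that a by (auto simp: red_diff)
      then have "v (a - g) = 1"
        using v_eq_1_if_red_neq_0 v_diff_le_1[OF a(1) True] by blast
      then show ?thesis
        using True by simp
    next
      case False
      then have "v (- g + a) = v (- g)"
        using a(1) by (intro v_add_eq_if_less) simp
      then show ?thesis
        using False by simp
    qed
    txt \<open>Then \<open>|F a|\<close> is at least the Gauss norm \<open>1\<close>, so \<open>a\<close> cannot reduce to a root.\<close>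
    obtain k where "v (coeff F k) = 1"
      using F nz by (rule v_coeff_eq_1_if_red_poly_neq_0)
    moreover have "v (coeff F k) \<le> v (poly F a)"
      using nz far by (intro v_coeff_le_v_poly_if_roots_far) auto
    moreover have "red (poly F a) = 0"
      using integral_poly_poly(2)[OF F a(1)] a(2) root by simp
    ultimately show False
      using red_eq_0_iff integral_poly_poly(1)[OF F a(1)] by fastforce
  qed
  then show thesis
    using that by blast
qed

lemma root_outside_disc_if_red_lead_coeff_eq_0:
  assumes F: "integral_poly F" and nz: "red_poly F \<noteq> 0" and lc: "red (lead_coeff F) = 0"
  obtains \<alpha> where "poly F \<alpha> = 0" "1 < v \<alpha>"
proof (rule ccontr)
  assume "\<not> thesis"
  then have "v (coeff F k) \<le> v (lead_coeff F)" for k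
    using that by (intro v_coeff_le_v_lead_coeff_if_roots_in_disc) (meson not_le)
  moreover obtain k where "v (coeff F k) = 1"
    using F nz by (rule v_coeff_eq_1_if_red_poly_neq_0)
  moreover have "v (lead_coeff F) < 1"
    using lc red_eq_0_iff F by blast
  ultimately show False
    by (metis not_le)
qed

end

text \<open>Characteristic 0 is needed only because critical points are detected through derivatives.\<close>

locale alg_closed_char_0_nonarch_residue = alg_closed_nonarch_residue v red
  for v :: "'a::field_char_0 \<Rightarrow> real" and red :: "'a \<Rightarrow> 'k::field"
begin

lemma finite_critical_point_lifts:
  assumes P: "integral_poly P" and Q: "integral_poly Q" and good: "good_reduction red P Q"
    and W: "wronskian (red_poly P) (red_poly Q) \<noteq> 0"
    and crit: "critical_point (red_poly P) (red_poly Q) (Some b)"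
  obtains \<alpha> where "critical_point P Q (Some \<alpha>)" "v \<alpha> \<le> 1" "red \<alpha> = b"
proof -
  have "poly (wronskian (red_poly P) (red_poly Q)) b = 0"
    using crit by (intro wronskian_root_if_fin_local_deg_ge_2) (simp add: critical_point_def local_deg_def)
  then obtain \<alpha> where \<alpha>: "v \<alpha> \<le> 1" "red \<alpha> = b" "poly (wronskian P Q) \<alpha> = 0"
    using root_of_red_poly_lifts integral_poly_wronskian[OF P Q] W by metis
  have "2 \<le> fin_local_deg P Q \<alpha>"
    using not_proportional_if_red_wronskian_neq_0[OF P Q W] \<alpha>(3)
      no_common_root_if_good_reduction[OF P Q good]
    by (intro fin_local_deg_ge_2_if_wronskian_root)
  with \<alpha> show thesis
    using that by (simp add: critical_point_def local_deg_def)
qed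

lemma critical_point_at_infinity_lifts:
  assumes P: "integral_poly P" and Q: "integral_poly Q" and good: "good_reduction red P Q"
    and W: "wronskian (red_poly P) (red_poly Q) \<noteq> 0"
    and crit: "critical_point (red_poly P) (red_poly Q) None"
  obtains w where "critical_point P Q w" "red_pt v red w = None"
proof -
  define d where "d = rdeg P Q"
  have rdeg_red: "rdeg (red_poly P) (red_poly Q) = d"
    using good unfolding good_reduction_def d_def by simp
  note nonconstant = not_proportional_if_red_wronskian_neq_0[OF P Q W]
  have "red (wronskian_top_coeff d P Q) = 0"
    using wronskian_top_coeff_eq_0_if_critical_point_infinity[OF crit] rdeg_red
    by (simp add: red_wronskian_top_coeff[OF P Q])
  show thesis
  proof (cases "wronskian_top_coeff d P Q = 0")
    case True
    then have "critical_point P Q None"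
      using nonconstant by (intro critical_point_infinity_if_wronskian_top_coeff_eq_0) (simp_all add: d_def)
    then show thesis
      using that by (simp add: red_pt_def)
  next
    case False
    have "degree P \<le> d" "degree Q \<le> d"
      unfolding d_def rdeg_def by simp_all
    then have "lead_coeff (wronskian P Q) = wronskian_top_coeff d P Q"
      using False degree_wronskian_le coeff_wronskian_top by (metis le_antisym le_degree)
    then obtain \<alpha> where \<alpha>: "poly (wronskian P Q) \<alpha> = 0" "1 < v \<alpha>"
      using root_outside_disc_if_red_lead_coeff_eq_0 integral_poly_wronskian[OF P Q] W
        \<open>red (wronskian_top_coeff d P Q) = 0\<close> by metis
    then have "2 \<le> fin_local_deg P Q \<alpha>"
      using nonconstant no_common_root_if_good_reduction[OF P Q good]
      by (intro fin_local_deg_ge_2_if_wronskian_root)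
    then show thesis
      using that[of "Some \<alpha>"] \<alpha>(2) by (simp add: critical_point_def local_deg_def red_pt_def)
  qed
qed

lemma critical_point_lifts:
  assumes P: "integral_poly P" and Q: "integral_poly Q" and good: "good_reduction red P Q"
    and W: "wronskian (red_poly P) (red_poly Q) \<noteq> 0"
    and crit: "critical_point (red_poly P) (red_poly Q) z"
  obtains w where "critical_point P Q w" "red_pt v red w = z"
proof (cases z)
  case None
  then show thesis
    using critical_point_at_infinity_lifts[OF P Q good W] crit that by metis
next
  case (Some b)
  then obtain \<alpha> where "critical_point P Q (Some \<alpha>)" "v \<alpha> \<le> 1" "red \<alpha> = b"
    using finite_critical_point_lifts[OF P Q good W] crit by metis
  with Some show thesis
    using that[of "Some \<alpha>"] by (simp add: red_pt_def)
qed

end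

theorem proposition3p6:
  fixes v :: "'a::field_char_0 \<Rightarrow> real" and p :: nat and K :: "'a set"
    and red :: "'a \<Rightarrow> 'k::field" and P Q :: "'a poly"
  assumes "finite_ext_Qp v p K"
    and "alg_closure_of K"
    and "residue_map v red"
    and "\<forall>i. coeff P i \<in> int_ring v K"
    and "\<forall>i. coeff Q i \<in> int_ring v K"
    and "good_reduction red P Q"
    and "height_is p (map_poly red P) (map_poly red Q) 0"
  shows "\<forall>z. critical_point (map_poly red P) (map_poly red Q) z \<longrightarrow>
           (\<exists>w. critical_point P Q w \<and> red_pt v red w = z)"
proof -
  have "nonarch_abs v" "v (of_nat p) < 1" "prime p"
    using assms(1) unfolding finite_ext_Qp_def by simp_all
  interpret alg_closed_char_0_nonarch_residue v red
    using \<open>nonarch_abs v\<close> assms(2,3) by unfold_locales (auto simp: alg_closure_of_def)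
  have P: "integral_poly P" and Q: "integral_poly Q"
    using assms(4,5) by (simp_all add: int_ring_def)
  have W: "wronskian (red_poly P) (red_poly Q) \<noteq> 0"
    using CHAR_residue_field \<open>prime p\<close> \<open>v (of_nat p) < 1\<close> assms(6,7) prime_gt_0_nat
    by (intro wronskian_neq_0_if_height_0) (simp_all add: good_reduction_def)
  show ?thesis
    using critical_point_lifts[OF P Q assms(6) W] by metis
qed

end
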